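(* For every integer $p\ge1$ and every complex $z$ with $e^z\ne1$, $$\sum_{n\ge0}\mathcal{B}_{n,p}\frac{z^n}{n!}=\frac{p\,\exp(e^z-1)}{(e^z-1)^p}\,\gamma\big(p,e^z-1\big).$$
   Context: $\gamma(s,w)=\int_0^w e^{-t}t^{s-1}\,dt$ is the lower incomplete gamma function (for integer $s\ge1$ an entire function of $w$). For an integer $p\ge0$, the $p$-Bell numbers $\mathcal{B}_{n,p}$ are defined by $\sum_{n\ge0}\mathcal{B}_{n,p}\frac{z^n}{n!}=\sum_{n\ge0}\binom{n+p}{p}^{-1}\frac{(e^z-1)^n}{n!}$ (an entire function of $z$ whose Taylor series is the left side). *)

theory Defs
  imports "HOL-Complex_Analysis.Complex_Analysis"
begin

text \<open>Lower incomplete gamma function for integer s \<ge> 1, as an entire function of w: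
  integral of e^(-t) t^(s-1) along the straight segment from 0 to w
  (path independent, since the integrand is entire).\<close>
definition lower_gamma :: "nat \<Rightarrow> complex \<Rightarrow> complex" where
  "lower_gamma s w = contour_integral (linepath 0 w) (\<lambda>t. exp (- t) * t ^ (s - 1))"

text \<open>The entire function whose Taylor series is the exponential generating function
  of the p-Bell numbers.\<close>
definition pBell_egf :: "nat \<Rightarrow> complex \<Rightarrow> complex" where
  "pBell_egf p z = (\<Sum>n. (exp z - 1) ^ n / (of_nat ((n + p) choose p) * fact n))"

definition pBell :: "nat \<Rightarrow> nat \<Rightarrow> complex" where
  "pBell p n = (deriv ^^ n) (pBell_egf p) 0"

end

theory Submission
  imports Defs
begin

text \<open>Since 1 / (C(n+p,p) n!) = p! / (n+p)!, the series defining the EGF is, in w = e^z - 1,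
  the tail of the exponential series beyond degree p, rescaled by p! / w^p. On the other side,
  -(p-1)! e^(-t) (sum of t^k/k! over k < p) is a primitive of e^(-t) t^(p-1), so
  gamma(p,w) = (p-1)! (1 - e^(-w) (sum of w^k/k! over k < p)), and the two closed forms agree.
  Finally the EGF is entire, so its Taylor series at 0 converges to it everywhere.\<close>

lemma exp_tail_sums:
  fixes w :: "'a::{real_normed_field,banach}"
  shows "(\<lambda>n. w ^ (n + p) / fact (n + p)) sums (exp w - (\<Sum>k<p. w ^ k / fact k))"
proof -
  have "(\<lambda>n. w ^ n / fact n) sums exp w"
    using exp_converges[of w] by (simp add: scaleR_conv_of_real divide_inverse mult.commute)
  then show ?thesis
    using sums_iff_shift[of "\<lambda>n. w ^ n / fact n" p] by simp
qed

lemma inverse_binomial_fact: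
  "1 / (of_nat ((n + p) choose p) * fact n) = (fact p / fact (n + p) :: 'a::field_char_0)"
proof -
  have "fact p * fact n * ((n + p) choose p) = (fact (n + p) :: nat)"
    using binomial_fact_lemma[of p "n + p"] by simp
  then have "fact p * fact n * of_nat ((n + p) choose p) = (fact (n + p) :: 'a)"
    by (metis of_nat_fact of_nat_mult)
  then show ?thesis
    by (simp add: field_simps)
qed

lemma pBell_series_sums:
  fixes w :: "'a::{real_normed_field,banach}"
  assumes "w \<noteq> 0"
  shows "(\<lambda>n. w ^ n / (of_nat ((n + p) choose p) * fact n)) sums
           (fact p / w ^ p * (exp w - (\<Sum>k<p. w ^ k / fact k)))"
proof -
  have "w ^ n / (of_nat ((n + p) choose p) * fact n) = fact p / w ^ p * (w ^ (n + p) / fact (n + p))"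
    for n
    using inverse_binomial_fact[of n p, where 'a = 'a] assms
    by (simp add: power_add field_simps)
  then show ?thesis
    using sums_mult[OF exp_tail_sums, of "fact p / w ^ p"] by simp
qed

lemma pBell_series_summable:
  "summable (\<lambda>n. (w::'a::{real_normed_field,banach}) ^ n / (of_nat ((n + p) choose p) * fact n))"
proof (cases "w = 0")
  case True
  then show ?thesis
    by (intro summable_finite[of "{0}"]) auto
next
  case False
  then show ?thesis
    using pBell_series_sums sums_summable by blast
qed

lemma pBell_egf_closed_form:
  assumes "exp z \<noteq> 1"
  shows "pBell_egf p z =
           fact p / (exp z - 1) ^ p * (exp (exp z - 1) - (\<Sum>k<p. (exp z - 1) ^ k / fact k))"
  using pBell_series_sums[of "exp z - 1" p] assms unfolding pBell_egf_def by (simp add: sums_iff)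

lemma holomorphic_pBell_egf: "pBell_egf p holomorphic_on UNIV"
proof -
  define c where "c n = 1 / (of_nat ((n + p) choose p) * fact n :: complex)" for n
  have "summable (\<lambda>n. c n * w ^ n)" for w
    using pBell_series_summable[of w p] by (simp add: c_def)
  then have "(\<lambda>w. \<Sum>n. c n * w ^ n) holomorphic_on UNIV"
    using termdiffs_strong_converges_everywhere holomorphic_on_open open_UNIV by blast
  then have "((\<lambda>w. \<Sum>n. c n * w ^ n) \<circ> (\<lambda>z. exp z - 1)) holomorphic_on UNIV"
    by (intro holomorphic_on_compose holomorphic_intros) (auto intro: holomorphic_on_subset)
  then show ?thesis
    by (simp add: pBell_egf_def[abs_def] c_def o_def)
qed

lemma pBell_egf_sums: "(\<lambda>n. pBell p n * z ^ n / fact n) sums pBell_egf p z"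
proof -
  have "(\<lambda>n. (deriv ^^ n) (pBell_egf p) 0 / fact n * (z - 0) ^ n) sums pBell_egf p z"
    by (rule holomorphic_power_series[where r = "norm z + 1"])
       (auto intro: holomorphic_on_subset[OF holomorphic_pBell_egf])
  then show ?thesis
    by (simp add: pBell_def field_simps)
qed

lemma has_field_derivative_exp_partial_sum:
  fixes t :: "'a::real_normed_field"
  shows "((\<lambda>t. \<Sum>k<Suc m. t ^ k / fact k) has_field_derivative (\<Sum>k<m. t ^ k / fact k)) (at t)"
proof (induction m)
  case 0
  then show ?case by simp
next
  case (Suc m)
  have "((\<lambda>t. t ^ Suc m / fact (Suc m)) has_field_derivative
          (of_nat (Suc m) * t ^ m / fact (Suc m))) (at t)"
    using DERIV_cdivide[OF DERIV_power_Suc[OF DERIV_ident, of m t], of "fact (Suc m)"]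
    by (simp add: algebra_simps)
  moreover have "of_nat (Suc m) * t ^ m / fact (Suc m) = t ^ m / (fact m :: 'a)"
    by (simp add: divide_simps del: of_nat_Suc)
  ultimately show ?case
    using DERIV_add[OF Suc] by simp
qed

lemma lower_gamma_closed_form:
  assumes "p \<ge> 1"
  shows "lower_gamma p w = fact (p - 1) * (1 - exp (- w) * (\<Sum>k<p. w ^ k / fact k))"
proof -
  obtain m where p: "p = Suc m"
    using assms by (cases p) auto
  define F where "F t = - fact m * exp (- t) * (\<Sum>k<Suc m. t ^ k / fact k)" for t :: complex
  have "(F has_field_derivative exp (- t) * t ^ m) (at t)" for t
  proof -
    have "((\<lambda>t. - fact m * exp (- t)) has_field_derivative fact m * exp (- t)) (at t)"
      by (auto intro!: derivative_eq_intros)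
    then have "(F has_field_derivative
                 - fact m * exp (- t) * (\<Sum>k<m. t ^ k / fact k)
                 + fact m * exp (- t) * (\<Sum>k<Suc m. t ^ k / fact k)) (at t)"
      unfolding F_def[abs_def] by (rule DERIV_mult'[OF _ has_field_derivative_exp_partial_sum])
    then show ?thesis
      by (simp add: algebra_simps)
  qed
  then have "((\<lambda>t. exp (- t) * t ^ (p - 1)) has_contour_integral F w - F 0) (linepath 0 w)"
    using contour_integral_primitive[of UNIV F, OF _ valid_path_linepath[of 0 w]] p
    by (auto intro: has_field_derivative_at_within)
  then have "lower_gamma p w = F w - F 0"
    unfolding lower_gamma_def by (rule contour_integral_unique)
  also have "\<dots> = fact (p - 1) * (1 - exp (- w) * (\<Sum>k<p. w ^ k / fact k))"
    unfolding F_def p by (simp add: field_simps lessThan_Suc_eq_insert_0 sum.reindex)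
  finally show ?thesis .
qed

theorem mainTheorem4:
  fixes p :: nat and z :: complex
  assumes "p \<ge> 1" and "exp z \<noteq> 1"
  shows "(\<lambda>n. pBell p n * z ^ n / fact n) sums
           (of_nat p * exp (exp z - 1) / (exp z - 1) ^ p * lower_gamma p (exp z - 1))"
proof -
  define w where "w = exp z - 1"
  have "(fact p :: complex) = of_nat p * fact (p - 1)"
    using assms(1) fact_reduce[of p] by (simp add: of_nat_diff)
  then have "of_nat p * exp w / w ^ p * lower_gamma p w
               = fact p / w ^ p * (exp w - (\<Sum>k<p. w ^ k / fact k))"
    by (simp add: lower_gamma_closed_form[OF assms(1)] right_diff_distrib exp_minus field_simps)
  also have "\<dots> = pBell_egf p z"
    using pBell_egf_closed_form[OF assms(2)] by (simp add: w_def)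
  finally show ?thesis
    using pBell_egf_sums[of p z] by (simp add: w_def)
qed

end
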